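(* Among all phylogenetic trees with $n$ leaves, the ones with maximum total cophenetic index are exactly the rooted caterpillars, and for a rooted caterpillar $K_n$ with $n$ leaves, $\Phi(K_n)=\binom{n}{3}$.
   Context: A phylogenetic tree with $n$ leaves is a rooted tree whose leaves are bijectively labeled by $\{1,\dots,n\}$, every internal node having at least two children; binary means every internal node has exactly two children. A rooted caterpillar is a binary phylogenetic tree all of whose internal nodes have a leaf child. The depth $\delta_T(v)$ is the number of arcs from the root to $v$; for leaves $i,j$, $\varphi_T(i,j)=\delta_T(LCA_T(i,j))$ ($LCA$ = lowest common ancestor), and $\Phi(T)=\sum_{1\le i<j\le n}\varphi_T(i,j)$ is the total cophenetic index. *)

theory Defs
  imports Main
begin

text \<open>Rooted trees with leaves labelled by naturals. The order of children in
  a Node is irrelevant for every notion below.\<close>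
datatype tree = Leaf nat | Node "tree list"

fun leaves :: "tree \<Rightarrow> nat list" where
  "leaves (Leaf a) = [a]"
| "leaves (Node cs) = concat (map leaves cs)"

fun subtrees :: "tree \<Rightarrow> tree set" where
  "subtrees (Leaf a) = {Leaf a}"
| "subtrees (Node cs) = insert (Node cs) (\<Union>c\<in>set cs. subtrees c)"

fun nodes_depth :: "tree \<Rightarrow> (tree \<times> nat) set" where
  "nodes_depth (Leaf a) = {(Leaf a, 0)}"
| "nodes_depth (Node cs) =
     insert (Node cs, 0) (\<Union>c\<in>set cs. (\<lambda>(s, d). (s, Suc d)) ` nodes_depth c)"

definition phylo :: "nat \<Rightarrow> tree \<Rightarrow> bool" where
  "phylo n t \<longleftrightarrow> (\<forall>cs. Node cs \<in> subtrees t \<longrightarrow> length cs \<ge> 2)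
      \<and> distinct (leaves t) \<and> set (leaves t) = {1..n}"

definition binary :: "tree \<Rightarrow> bool" where
  "binary t \<longleftrightarrow> (\<forall>cs. Node cs \<in> subtrees t \<longrightarrow> length cs = 2)"

definition caterpillar :: "tree \<Rightarrow> bool" where
  "caterpillar t \<longleftrightarrow> binary t \<and> (\<forall>cs. Node cs \<in> subtrees t \<longrightarrow> (\<exists>a. Leaf a \<in> set cs))"

text \<open>Depth of the lowest common ancestor of leaves i and j: the LCA is the
  deepest node whose clade contains both i and j.\<close>
definition phi :: "tree \<Rightarrow> nat \<Rightarrow> nat \<Rightarrow> nat" where
  "phi t i j = Max {d. \<exists>s. (s, d) \<in> nodes_depth t \<and> i \<in> set (leaves s) \<and> j \<in> set (leaves s)}"

definition Phi :: "tree \<Rightarrow> nat" where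
  "Phi t = (\<Sum>i\<in>set (leaves t). \<Sum>j\<in>{j \<in> set (leaves t). i < j}. phi t i j)"

end

theory Submission
  imports Defs
begin

text \<open>
  The proof rests on the recurrence
    Phi (Node cs) = sum over children c of (Phi c + (m_c choose 2)),
  where m_c is the number of leaves of c: a pair of leaves in the same child has its LCA one
  level deeper than within that child, and a pair in different children has its LCA at the root.
  We first establish the binomial inequality (a+1 choose 3) + (b+1 choose 3) \<le> (a+b choose 3)
  for a, b \<ge> 1, with equality iff a = 1 or b = 1, and its extension to lists of at least two
  terms.  Induction on the tree then bounds Phi by (m choose 3), equality forcing two
  children, one a leaf, each extremal: a caterpillar.  Since caterpillars with leaves 1..n exist,
  maximisers of Phi are exactly the caterpillars and their index is n choose 3.
\<close>

lemma choose2_add: "(a + b) choose 2 = (a choose 2) + a * b + (b choose 2)"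
  by (induction b) (auto simp: numeral_2_eq_2 algebra_simps)

lemma choose3_Suc: "(k + 1) choose 3 = (k choose 3) + (k choose 2)"
  by (simp add: numeral_3_eq_3 numeral_2_eq_2)

text \<open>Splitting a triple count over a disjoint union of sizes a+1 and b+1; the two correction
  terms vanish exactly when a = 0 or b = 0.\<close>
lemma choose3_split:
  "(Suc a + Suc b) choose 3
     = (Suc (Suc a) choose 3) + (Suc (Suc b) choose 3) + (Suc a choose 2) * b + a * (Suc b choose 2)"
proof (induction b)
  case 0
  show ?case by (simp add: numeral_3_eq_3 numeral_2_eq_2)
next
  case (Suc b)
  have "(Suc a + Suc (Suc b)) choose 3 = ((Suc a + Suc b) choose 3) + ((Suc a + Suc b) choose 2)"
    by (simp add: numeral_3_eq_3 numeral_2_eq_2)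
  then show ?case
    using Suc choose2_add[of "Suc a" "Suc b"] by (simp add: numeral_3_eq_3 numeral_2_eq_2 algebra_simps)
qed

lemma choose3_superadditive:
  assumes "1 \<le> a" "1 \<le> b"
  shows "((a + 1) choose 3) + ((b + 1) choose 3) \<le> (a + b) choose 3"
    and "((a + 1) choose 3) + ((b + 1) choose 3) = (a + b) choose 3 \<longleftrightarrow> a = 1 \<or> b = 1"
proof -
  obtain a' b' where ab: "a = Suc a'" "b = Suc b'"
    using assms by (metis Suc_le_D One_nat_def)
  have split: "(a + b) choose 3 = ((a + 1) choose 3) + ((b + 1) choose 3) + ((a choose 2) * b' + a' * (b choose 2))"
    unfolding ab using choose3_split[of a' b'] by simp
  have "(a choose 2) * b' + a' * (b choose 2) = 0 \<longleftrightarrow> a' = 0 \<or> b' = 0"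
    unfolding ab by (auto simp: numeral_2_eq_2)
  then show "((a + 1) choose 3) + ((b + 1) choose 3) \<le> (a + b) choose 3"
    and "((a + 1) choose 3) + ((b + 1) choose 3) = (a + b) choose 3 \<longleftrightarrow> a = 1 \<or> b = 1"
    using split ab by auto
qed

lemma length_le_sum_list: "\<forall>x\<in>set xs. 1 \<le> (x::nat) \<Longrightarrow> length xs \<le> sum_list xs"
  by (induction xs) auto

lemma sum_list_mono_eq_iff:
  "\<forall>x\<in>set xs. f x \<le> (g x :: nat) \<Longrightarrow>
   sum_list (map f xs) = sum_list (map g xs) \<longleftrightarrow> (\<forall>x\<in>set xs. f x = g x)"
proof (induction xs)
  case (Cons x xs)
  have "sum_list (map f xs) \<le> sum_list (map g xs)" using Cons.prems by (intro sum_list_mono) simp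
  then show ?case using Cons by auto
qed simp

lemma choose3_superadditive_list:
  assumes "2 \<le> length xs" "\<forall>x\<in>set xs. 1 \<le> x"
  shows "(\<Sum>x\<leftarrow>xs. (x + 1) choose 3) \<le> sum_list xs choose 3"
    and "(\<Sum>x\<leftarrow>xs. (x + 1) choose 3) = sum_list xs choose 3 \<longleftrightarrow> length xs = 2 \<and> 1 \<in> set xs"
proof -
  have "(\<Sum>x\<leftarrow>xs. (x + 1) choose 3) \<le> sum_list xs choose 3 \<and>
    ((\<Sum>x\<leftarrow>xs. (x + 1) choose 3) = sum_list xs choose 3 \<longleftrightarrow> length xs = 2 \<and> 1 \<in> set xs)"
    using assms
  proof (induction xs)
    case Nil
    then show ?case by simp
  next
    case (Cons x xs)
    show ?case
    proof (cases "length xs = 1")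
      case True
      then obtain y where "xs = [y]" by (metis One_nat_def length_0_conv length_Suc_conv)
      then show ?thesis using choose3_superadditive[of x y] Cons.prems by auto
    next
      case False
      let ?S = "sum_list xs"
      have long: "2 \<le> length xs" using False Cons.prems by simp
      have "2 \<le> ?S" using long length_le_sum_list[of xs] Cons.prems by simp
      then have "0 < ?S choose 2" by (rule zero_less_binomial)
      then have grow: "(?S choose 3) < (?S + 1) choose 3" unfolding choose3_Suc by simp
      have "(\<Sum>y\<leftarrow>x # xs. (y + 1) choose 3) \<le> ((x + 1) choose 3) + (?S choose 3)"
        using Cons.IH long Cons.prems by simp
      also have "\<dots> < ((x + 1) choose 3) + ((?S + 1) choose 3)" using grow by simp
      also have "\<dots> \<le> (x + ?S) choose 3"
        using choose3_superadditive(1)[of x ?S] Cons.prems \<open>2 \<le> ?S\<close> by simp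
      finally show ?thesis using long by simp
    qed
  qed
  then show "(\<Sum>x\<leftarrow>xs. (x + 1) choose 3) \<le> sum_list xs choose 3"
    and "(\<Sum>x\<leftarrow>xs. (x + 1) choose 3) = sum_list xs choose 3 \<longleftrightarrow> length xs = 2 \<and> 1 \<in> set xs"
    by auto
qed

text \<open>Unlike phylo n this class is closed under taking children.\<close>
definition phylo_shape :: "tree \<Rightarrow> bool" where
  "phylo_shape t \<longleftrightarrow> (\<forall>cs. Node cs \<in> subtrees t \<longrightarrow> length cs \<ge> 2) \<and> distinct (leaves t)"

lemma phylo_shape_child: "phylo_shape (Node cs) \<Longrightarrow> c \<in> set cs \<Longrightarrow> phylo_shape c"
  unfolding phylo_shape_def by (auto simp: distinct_concat_iff)

lemma phylo_shape_Node_length: "phylo_shape (Node cs) \<Longrightarrow> 2 \<le> length cs"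
  unfolding phylo_shape_def by auto

lemma leaves_nonempty: "phylo_shape t \<Longrightarrow> leaves t \<noteq> []"
proof (induction t)
  case (Leaf a)
  then show ?case by simp
next
  case (Node cs)
  obtain c where c: "c \<in> set cs"
    using phylo_shape_Node_length[OF Node.prems] by (cases cs) auto
  then have "leaves c \<noteq> []" using Node.IH phylo_shape_child Node.prems by blast
  then show ?case using c by auto
qed

lemma length_leaves_Node: "length (leaves (Node cs)) = (\<Sum>c\<leftarrow>cs. length (leaves c))"
  by (induction cs) auto

lemma length_leaves_one_iff: "phylo_shape t \<Longrightarrow> length (leaves t) = 1 \<longleftrightarrow> (\<exists>a. t = Leaf a)"
proof (cases t)
  case (Node cs)
  assume shape: "phylo_shape t"
  have "\<forall>c\<in>set cs. 1 \<le> length (leaves c)"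
    using leaves_nonempty phylo_shape_child shape Node by (simp add: Suc_leI)
  then have "length cs \<le> length (leaves t)"
    using length_le_sum_list[of "map (\<lambda>c. length (leaves c)) cs"] Node
    by (simp add: length_concat comp_def)
  then show ?thesis using phylo_shape_Node_length shape Node by fastforce
qed simp

lemma caterpillar_Leaf: "caterpillar (Leaf a)"
  unfolding caterpillar_def binary_def by simp

lemma caterpillar_Node:
  "caterpillar (Node cs) \<longleftrightarrow> length cs = 2 \<and> (\<exists>a. Leaf a \<in> set cs) \<and> (\<forall>c\<in>set cs. caterpillar c)"
  unfolding caterpillar_def binary_def by auto

definition ancestor_depths :: "tree \<Rightarrow> nat \<Rightarrow> nat \<Rightarrow> nat set" where
  "ancestor_depths t i j =
     {d. \<exists>s. (s, d) \<in> nodes_depth t \<and> i \<in> set (leaves s) \<and> j \<in> set (leaves s)}"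

lemma phi_ancestor_depths: "phi t i j = Max (ancestor_depths t i j)"
  unfolding phi_def ancestor_depths_def by simp

lemma finite_ancestor_depths: "finite (ancestor_depths t i j)"
proof -
  have "finite (nodes_depth t)" by (induction t) auto
  moreover have "ancestor_depths t i j \<subseteq> snd ` nodes_depth t"
    unfolding ancestor_depths_def by force
  ultimately show ?thesis using finite_surj by blast
qed

lemma nodes_depth_leaves: "(s, d) \<in> nodes_depth t \<Longrightarrow> set (leaves s) \<subseteq> set (leaves t)"
  by (induction t arbitrary: s d) fastforce+

lemma root_in_ancestor_depths:
  "i \<in> set (leaves t) \<Longrightarrow> j \<in> set (leaves t) \<Longrightarrow> 0 \<in> ancestor_depths t i j"
proof -
  assume "i \<in> set (leaves t)" "j \<in> set (leaves t)"
  moreover have "(t, 0) \<in> nodes_depth t" by (cases t) auto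
  ultimately show ?thesis unfolding ancestor_depths_def by blast
qed

lemma ancestor_depths_empty: "i \<notin> set (leaves t) \<Longrightarrow> ancestor_depths t i j = {}"
  unfolding ancestor_depths_def using nodes_depth_leaves by blast

lemma ancestor_depths_Node:
  assumes "i \<in> set (leaves (Node cs))" "j \<in> set (leaves (Node cs))"
  shows "ancestor_depths (Node cs) i j = insert 0 (\<Union>c\<in>set cs. Suc ` ancestor_depths c i j)"
proof (intro equalityI subsetI)
  fix d
  assume "d \<in> ancestor_depths (Node cs) i j"
  then obtain s where s: "(s, d) \<in> nodes_depth (Node cs)" "i \<in> set (leaves s)" "j \<in> set (leaves s)"
    unfolding ancestor_depths_def by blast
  show "d \<in> insert 0 (\<Union>c\<in>set cs. Suc ` ancestor_depths c i j)"
  proof (cases "d = 0")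
    case False
    then obtain c d' where "c \<in> set cs" "(s, d') \<in> nodes_depth c" "d = Suc d'"
      using s(1) by auto
    then show ?thesis using s unfolding ancestor_depths_def by blast
  qed simp
next
  fix d
  assume "d \<in> insert 0 (\<Union>c\<in>set cs. Suc ` ancestor_depths c i j)"
  then show "d \<in> ancestor_depths (Node cs) i j"
  proof
    assume "d = 0"
    then show ?thesis using root_in_ancestor_depths[OF assms] by simp
  next
    assume "d \<in> (\<Union>c\<in>set cs. Suc ` ancestor_depths c i j)"
    then obtain c d' s where "c \<in> set cs" "d = Suc d'" "(s, d') \<in> nodes_depth c"
      "i \<in> set (leaves s)" "j \<in> set (leaves s)"
      unfolding ancestor_depths_def by blast
    then show ?thesis unfolding ancestor_depths_def by force
  qed
qed

lemma unique_child:
  "distinct (concat (map leaves cs)) \<Longrightarrow> c \<in> set cs \<Longrightarrow> c' \<in> set cs \<Longrightarrow>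
   x \<in> set (leaves c) \<Longrightarrow> x \<in> set (leaves c') \<Longrightarrow> c = c'"
  by (induction cs) auto

lemma phi_Node_same_child:
  assumes dist: "distinct (concat (map leaves cs))" and c: "c \<in> set cs"
    and ij: "i \<in> set (leaves c)" "j \<in> set (leaves c)"
  shows "phi (Node cs) i j = Suc (phi c i j)"
proof -
  have others: "ancestor_depths c' i j = {}" if "c' \<in> set cs" "c' \<noteq> c" for c'
  proof -
    have "i \<notin> set (leaves c')" using unique_child[OF dist c that(1) ij(1)] that(2) by blast
    then show ?thesis by (rule ancestor_depths_empty)
  qed
  have "ancestor_depths (Node cs) i j = insert 0 (Suc ` ancestor_depths c i j)"
    using ancestor_depths_Node[of i cs j] others c ij by auto
  moreover have "ancestor_depths c i j \<noteq> {}" using root_in_ancestor_depths ij by blast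
  ultimately show ?thesis
    unfolding phi_ancestor_depths
    using finite_ancestor_depths mono_Max_commute[of Suc] by (simp add: mono_def)
qed

lemma phi_Node_different_children:
  assumes dist: "distinct (concat (map leaves cs))" and cs: "c \<in> set cs" "c' \<in> set cs" "c \<noteq> c'"
    and ij: "i \<in> set (leaves c)" "j \<in> set (leaves c')"
  shows "phi (Node cs) i j = 0"
proof -
  have none: "ancestor_depths c'' i j = {}" if "c'' \<in> set cs" for c''
  proof (cases "i \<in> set (leaves c'')")
    case True
    then have "c'' = c" using unique_child[OF dist cs(1) that ij(1)] by simp
    then have "j \<notin> set (leaves c'')" using unique_child[OF dist cs(2) that ij(2)] cs(3) by blast
    then show ?thesis unfolding ancestor_depths_def using nodes_depth_leaves by blast
  qed (rule ancestor_depths_empty)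
  have "ancestor_depths (Node cs) i j = {0}"
    using ancestor_depths_Node[of i cs j] none cs ij by auto
  then show ?thesis unfolding phi_ancestor_depths by simp
qed

lemma card_increasing_pairs:
  "finite A \<Longrightarrow> (\<Sum>i\<in>A. card {j\<in>A. i < (j::nat)}) = card A choose 2"
proof (induction A rule: finite_linorder_max_induct)
  case empty
  then show ?case by simp
next
  case (insert b A)
  have "b \<notin> A" using insert by auto
  have "\<And>i. i \<in> A \<Longrightarrow> card {j\<in>insert b A. i < j} = Suc (card {j\<in>A. i < j})"
  proof -
    fix i assume "i \<in> A"
    then have "{j\<in>insert b A. i < j} = insert b {j\<in>A. i < j}" using insert by auto
    then show "card {j\<in>insert b A. i < j} = Suc (card {j\<in>A. i < j})" using \<open>b \<notin> A\<close> insert by simp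
  qed
  moreover have "{j\<in>insert b A. b < j} = {}" using insert by auto
  ultimately have "(\<Sum>i\<in>insert b A. card {j\<in>insert b A. i < j}) = (\<Sum>i\<in>A. 1 + card {j\<in>A. i < j})"
    using insert \<open>b \<notin> A\<close> by simp
  also have "\<dots> = card A + (card A choose 2)" using insert by (simp add: sum_Suc)
  also have "\<dots> = card (insert b A) choose 2" using insert \<open>b \<notin> A\<close> by (simp add: numeral_2_eq_2)
  finally show ?case .
qed

lemma Phi_Leaf: "Phi (Leaf a) = 0"
proof -
  have "{j \<in> set (leaves (Leaf a)). a < j} = {}" by simp
  then show ?thesis unfolding Phi_def by simp
qed

lemma Phi_row_Node:
  assumes dist: "distinct (concat (map leaves cs))" and c: "c \<in> set cs" and i: "i \<in> set (leaves c)"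
  shows "(\<Sum>j\<in>{j\<in>set (leaves (Node cs)). i < j}. phi (Node cs) i j)
       = (\<Sum>j\<in>{j\<in>set (leaves c). i < j}. Suc (phi c i j))"
proof (rule sum.mono_neutral_cong_right)
  show "{j\<in>set (leaves c). i < j} \<subseteq> {j\<in>set (leaves (Node cs)). i < j}" using c by auto
  show "\<forall>j\<in>{j\<in>set (leaves (Node cs)). i < j} - {j\<in>set (leaves c). i < j}. phi (Node cs) i j = 0"
  proof
    fix j
    assume j: "j \<in> {j\<in>set (leaves (Node cs)). i < j} - {j\<in>set (leaves c). i < j}"
    then obtain c' where c': "c' \<in> set cs" "j \<in> set (leaves c')" by auto
    then have "c \<noteq> c'" using j by auto
    then show "phi (Node cs) i j = 0" using phi_Node_different_children[OF dist c c'(1) _ i c'(2)] by simp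
  qed
  show "\<And>j. j \<in> {j\<in>set (leaves c). i < j} \<Longrightarrow> phi (Node cs) i j = Suc (phi c i j)"
    using phi_Node_same_child[OF dist c i] by simp
qed simp

lemma Phi_child_contribution:
  assumes "distinct (leaves c)"
  shows "(\<Sum>i\<in>set (leaves c). \<Sum>j\<in>{j\<in>set (leaves c). i < j}. Suc (phi c i j))
       = Phi c + (length (leaves c) choose 2)"
proof -
  have "(\<Sum>i\<in>set (leaves c). \<Sum>j\<in>{j\<in>set (leaves c). i < j}. Suc (phi c i j))
      = (\<Sum>i\<in>set (leaves c). card {j\<in>set (leaves c). i < j}) + Phi c"
    unfolding Phi_def by (simp add: sum_Suc sum.distrib)
  then show ?thesis using card_increasing_pairs assms by (simp add: distinct_card)
qed

text \<open>Children carrying disjoint nonempty leaf sets are pairwise distinct, so sums over the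
  list of children agree with sums over the set of children.\<close>
lemma distinct_children:
  "distinct (concat (map leaves cs)) \<Longrightarrow> \<forall>c\<in>set cs. leaves c \<noteq> [] \<Longrightarrow> distinct cs"
proof (induction cs)
  case (Cons c cs)
  obtain x where "x \<in> set (leaves c)" using Cons.prems(2) by (cases "leaves c") auto
  then have "c \<notin> set cs" using Cons.prems(1) by auto
  then show ?case using Cons by auto
qed simp

text \<open>The fundamental recurrence: every pair below a child c is counted one level deeper,
  so the root adds (number of leaves of c) choose 2 for each child c.\<close>
lemma Phi_Node:
  assumes shape: "phylo_shape (Node cs)"
  shows "Phi (Node cs) = (\<Sum>c\<leftarrow>cs. Phi c + (length (leaves c) choose 2))"
proof -
  have dist: "distinct (concat (map leaves cs))" using shape unfolding phylo_shape_def by simp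
  have disjoint: "\<forall>c\<in>set cs. \<forall>c'\<in>set cs. c \<noteq> c' \<longrightarrow> set (leaves c) \<inter> set (leaves c') = {}"
    using unique_child[OF dist] by blast
  have "distinct cs"
    using distinct_children[OF dist] leaves_nonempty phylo_shape_child[OF shape] by blast
  have "Phi (Node cs) = (\<Sum>i\<in>(\<Union>c\<in>set cs. set (leaves c)).
          \<Sum>j\<in>{j\<in>set (leaves (Node cs)). i < j}. phi (Node cs) i j)"
    unfolding Phi_def by simp
  also have "\<dots> = (\<Sum>c\<in>set cs. \<Sum>i\<in>set (leaves c).
          \<Sum>j\<in>{j\<in>set (leaves (Node cs)). i < j}. phi (Node cs) i j)"
    by (rule sum.UNION_disjoint) (use disjoint in simp_all)
  also have "\<dots> = (\<Sum>c\<in>set cs. \<Sum>i\<in>set (leaves c). \<Sum>j\<in>{j\<in>set (leaves c). i < j}. Suc (phi c i j))"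
    using Phi_row_Node[OF dist] by simp
  also have "\<dots> = (\<Sum>c\<in>set cs. Phi c + (length (leaves c) choose 2))"
    using Phi_child_contribution phylo_shape_child[OF shape] unfolding phylo_shape_def by simp
  also have "\<dots> = (\<Sum>c\<leftarrow>cs. Phi c + (length (leaves c) choose 2))"
    using \<open>distinct cs\<close> by (simp add: sum_list_distinct_conv_sum_set)
  finally show ?thesis .
qed

text \<open>By the recurrence and induction the index is at most
  the sum of (m_c + 1) choose 3 over the children, which is bounded by superadditivity;
  equality forces two children, one of them a leaf, both subtrees extremal.\<close>
lemma Phi_bound:
  assumes "phylo_shape t"
  shows "Phi t \<le> length (leaves t) choose 3
    \<and> (Phi t = length (leaves t) choose 3 \<longleftrightarrow> caterpillar t)"
  using assms
proof (induction t)
  case (Leaf a)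
  then show ?case by (simp add: Phi_Leaf caterpillar_Leaf)
next
  case (Node cs)
  define m where "m = (\<lambda>c. length (leaves c))"
  have IH: "\<forall>c\<in>set cs. Phi c \<le> m c choose 3 \<and> (Phi c = m c choose 3 \<longleftrightarrow> caterpillar c)"
    using Node phylo_shape_child m_def by blast
  have pos: "\<forall>x\<in>set (map m cs). 1 \<le> x"
    using leaves_nonempty phylo_shape_child Node.prems m_def by (auto simp: Suc_leI)
  have len: "2 \<le> length (map m cs)" using phylo_shape_Node_length Node.prems by simp
  have total: "length (leaves (Node cs)) = sum_list (map m cs)"
    unfolding m_def by (rule length_leaves_Node)
  let ?A = "\<Sum>c\<leftarrow>cs. Phi c + (m c choose 2)"
  let ?B = "\<Sum>c\<leftarrow>cs. (m c + 1) choose 3"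
  let ?N = "length (leaves (Node cs)) choose 3"
  have rec: "Phi (Node cs) = ?A"
    using Phi_Node[OF Node.prems] m_def by simp
  have termwise: "\<forall>c\<in>set cs. Phi c + (m c choose 2) \<le> (m c + 1) choose 3"
    using IH choose3_Suc by simp
  then have AB: "?A \<le> ?B" by (intro sum_list_mono) simp
  have BN: "?B \<le> ?N"
    using choose3_superadditive_list(1)[OF len pos] total by (simp add: comp_def)
  have AB_eq: "?A = ?B \<longleftrightarrow> (\<forall>c\<in>set cs. Phi c = m c choose 3)"
    using sum_list_mono_eq_iff[OF termwise] choose3_Suc by simp
  have BN_eq: "?B = ?N \<longleftrightarrow> length cs = 2 \<and> 1 \<in> set (map m cs)"
    using choose3_superadditive_list(2)[OF len pos] total by (simp add: comp_def)
  have "\<forall>c\<in>set cs. m c = 1 \<longleftrightarrow> (\<exists>a. c = Leaf a)"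
    using length_leaves_one_iff phylo_shape_child[OF Node.prems] m_def by blast
  then have has_leaf: "1 \<in> set (map m cs) \<longleftrightarrow> (\<exists>a. Leaf a \<in> set cs)"
    by (metis (mono_tags, lifting) imageE image_eqI list.set_map)
  have "Phi (Node cs) = ?N \<longleftrightarrow> ?A = ?B \<and> ?B = ?N"
    using rec AB BN by linarith
  also have "\<dots> \<longleftrightarrow> caterpillar (Node cs)"
    unfolding AB_eq BN_eq has_leaf caterpillar_Node using IH by auto
  finally show ?case using rec AB BN by simp
qed

lemma phylo_shape_if_phylo: "phylo n t \<Longrightarrow> phylo_shape t \<and> length (leaves t) = n"
  unfolding phylo_def phylo_shape_def by (metis card_atLeastAtMost diff_Suc_1 distinct_card)

lemma phylo_positive: "phylo n t \<Longrightarrow> 1 \<le> n"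
  using phylo_shape_if_phylo leaves_nonempty by (metis One_nat_def Suc_leI length_greater_0_conv)

lemma Phi_bound_phylo:
  "phylo n t \<Longrightarrow> Phi t \<le> n choose 3 \<and> (Phi t = n choose 3 \<longleftrightarrow> caterpillar t)"
  using phylo_shape_if_phylo Phi_bound by metis

fun caterpillar_tree :: "nat \<Rightarrow> tree" where
  "caterpillar_tree 0 = Leaf 1"
| "caterpillar_tree (Suc 0) = Leaf 1"
| "caterpillar_tree (Suc (Suc m)) = Node [Leaf (Suc (Suc m)), caterpillar_tree (Suc m)]"

lemma caterpillar_tree_phylo: "1 \<le> n \<Longrightarrow> phylo n (caterpillar_tree n) \<and> caterpillar (caterpillar_tree n)"
proof (induction n rule: caterpillar_tree.induct)
  case (3 m)
  then show ?case
    unfolding phylo_def by (auto simp: caterpillar_Node caterpillar_def binary_def)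
qed (auto simp: phylo_def caterpillar_Leaf)

theorem mainTheorem7:
  fixes n :: nat
  shows "\<forall>T. phylo n T \<longrightarrow> ((\<forall>T'. phylo n T' \<longrightarrow> Phi T' \<le> Phi T) \<longleftrightarrow> caterpillar T)
       \<and> (\<forall>T. phylo n T \<and> caterpillar T \<longrightarrow> Phi T = n choose 3)"
proof (intro allI impI conjI)
  fix T
  assume T: "phylo n T"
  obtain K where K: "phylo n K" "caterpillar K"
    using caterpillar_tree_phylo[OF phylo_positive[OF T]] by blast
  show "(\<forall>T'. phylo n T' \<longrightarrow> Phi T' \<le> Phi T) \<longleftrightarrow> caterpillar T"
  proof
    assume "\<forall>T'. phylo n T' \<longrightarrow> Phi T' \<le> Phi T"
    then have "Phi K \<le> Phi T" using K by blast
    then show "caterpillar T" using Phi_bound_phylo[OF T] Phi_bound_phylo[OF K(1)] K(2) by auto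
  next
    assume "caterpillar T"
    then show "\<forall>T'. phylo n T' \<longrightarrow> Phi T' \<le> Phi T" using Phi_bound_phylo[OF T] Phi_bound_phylo by auto
  qed
next
  fix T
  assume "phylo n T \<and> caterpillar T"
  then show "Phi T = n choose 3" using Phi_bound_phylo by blast
qed

end
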